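(* Let $\Omega=\{(x,y,z)\in\mathbb{R}^3: z<xy^2\}$. Then $\Omega$ is a $C^\infty$ domain, but $\Omega$ has no uniformly $C^2$ defining function.
   Context: A $C^m$ defining function for an open set $\Omega\subset\mathbb{R}^n$ is a real-valued $C^m$ function $\rho$ on an open neighborhood $U$ of $\partial\Omega$ with $\{x\in U:\rho<0\}=\Omega\cap U$ and $\nabla\rho\neq0$ on $\partial\Omega$; $\Omega$ is a $C^\infty$ domain if it has a $C^\infty$ defining function. A defining function is uniformly $C^m$ if $\operatorname{dist}(\partial\Omega,\partial U)>0$, $\sup_{U}\sum_{|\alpha|\le m}|\partial^\alpha\rho|<\infty$, and $\inf_U|\nabla\rho|>0$. *)

theory Defs
  imports "HOL-Analysis.Analysis"
begin

definition pd :: "(real^'n \<Rightarrow> real) \<Rightarrow> 'n \<Rightarrow> real^'n \<Rightarrow> real" where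
  "pd f i x = deriv (\<lambda>t. f (x + t *\<^sub>R axis i 1)) 0"

definition grad :: "(real^'n \<Rightarrow> real) \<Rightarrow> real^'n \<Rightarrow> real^'n" where
  "grad f x = (\<chi> i. pd f i x)"

fun iter_pd :: "(real^'n \<Rightarrow> real) \<Rightarrow> 'n list \<Rightarrow> real^'n \<Rightarrow> real" where
  "iter_pd f [] = f"
| "iter_pd f (i # is) = pd (iter_pd f is) i"

primrec Ck :: "nat \<Rightarrow> (real^'n) set \<Rightarrow> (real^'n \<Rightarrow> real) \<Rightarrow> bool" where
  "Ck 0 U f \<longleftrightarrow> continuous_on U f"
| "Ck (Suc m) U f \<longleftrightarrow> continuous_on U f \<and>
     (\<forall>i. \<forall>x\<in>U. (\<lambda>t. f (x + t *\<^sub>R axis i 1)) differentiable (at 0)) \<and>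
     (\<forall>i. Ck m U (pd f i))"

definition defining_function ::
  "nat \<Rightarrow> (real^'n) set \<Rightarrow> (real^'n) set \<Rightarrow> (real^'n \<Rightarrow> real) \<Rightarrow> bool" where
  "defining_function m \<Omega> U \<rho> \<longleftrightarrow>
     open U \<and> frontier \<Omega> \<subseteq> U \<and> Ck m U \<rho> \<and>
     {x\<in>U. \<rho> x < 0} = \<Omega> \<inter> U \<and> (\<forall>x\<in>frontier \<Omega>. grad \<rho> x \<noteq> 0)"

definition C_infinity_domain :: "(real^'n) set \<Rightarrow> bool" where
  "C_infinity_domain \<Omega> \<longleftrightarrow> (\<exists>U \<rho>. \<forall>m. defining_function m \<Omega> U \<rho>)"

text \<open>Uniformly C^m defining function. dist(boundary Omega, boundary U) > 0 is stated as a
  positive uniform lower bound on distances (vacuous, i.e. infinite distance, if a boundary is empty).\<close>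
definition uniform_defining_function ::
  "nat \<Rightarrow> (real^'n) set \<Rightarrow> (real^'n) set \<Rightarrow> (real^'n \<Rightarrow> real) \<Rightarrow> bool" where
  "uniform_defining_function m \<Omega> U \<rho> \<longleftrightarrow>
     defining_function m \<Omega> U \<rho> \<and>
     (\<exists>\<delta>>0. \<forall>x\<in>frontier \<Omega>. \<forall>y\<in>frontier U. \<delta> \<le> dist x y) \<and>
     (\<exists>B. \<forall>x\<in>U. \<forall>is. length is \<le> m \<longrightarrow> \<bar>iter_pd \<rho> is x\<bar> \<le> B) \<and>
     (\<exists>c>0. \<forall>x\<in>U. c \<le> norm (grad \<rho> x))"

end

theory Submission
  imports Defs
begin

text \<open>
  Smoothness is immediate: \<open>\<rho> = z - x y\<^sup>2\<close> is a polynomial, hence \<open>C\<^sup>m\<close> for all \<open>m\<close>, with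
  \<open>\<partial>\<^sub>z\<rho> = 1\<close>. For the negative part, suppose \<open>\<rho>\<close> is a uniformly \<open>C\<^sup>2\<close> defining function on \<open>U\<close>, with
  second derivatives bounded by \<open>B\<close>, \<open>|\<nabla>\<rho>| \<ge> c > 0\<close>, and \<open>U\<close> containing a \<open>\<delta>\<close>-neighbourhood of
  \<open>\<partial>\<Omega>\<close>. Then \<open>\<rho> = 0\<close> on \<open>\<partial>\<Omega>\<close>, which contains the graph \<open>z = x y\<^sup>2\<close>. At \<open>p = (X,0,0)\<close> the
  function \<open>y \<mapsto> \<rho>(X,y,0)\<close> has a maximum, so the gradient there is vertical and \<open>|\<partial>\<^sub>z\<rho>(p)| \<ge> c\<close>.
  A Taylor bound gives \<open>|\<rho>(X,s,0)| \<le> B s\<^sup>2\<close>, while \<open>\<rho>(X,s,X s\<^sup>2) = 0\<close> and \<open>|\<partial>\<^sub>z\<rho>| \<ge> c/2\<close> nearby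
  force \<open>|\<rho>(X,s,0)| \<ge> X s\<^sup>2 c/2\<close>; taking \<open>X > 2B/c\<close> is absurd.
\<close>

lemma real_polynomial_function_partials:
  fixes f :: "real^'n \<Rightarrow> real"
  assumes "real_polynomial_function f"
  shows "(\<forall>i x. ((\<lambda>t. f (x + t *\<^sub>R axis i 1)) has_real_derivative pd f i x) (at 0)) \<and>
         (\<forall>i. real_polynomial_function (pd f i))"
  using assms
proof (induction rule: real_polynomial_function.induct)
  case (linear f)
  have d: "((\<lambda>t. f (x + t *\<^sub>R axis i 1)) has_real_derivative f (axis i 1)) (at 0)" for i x
  proof -
    have "(\<lambda>t. f (x + t *\<^sub>R axis i 1)) = (\<lambda>t. f x + t * f (axis i 1))"
      using linear by (simp add: linear_simps)
    then show ?thesis by (auto intro!: derivative_eq_intros)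
  qed
  have "pd f i = (\<lambda>x. f (axis i 1))" for i
    by (rule ext) (simp add: pd_def DERIV_imp_deriv[OF d])
  then show ?case using d by auto
next
  case (const c)
  have "pd (\<lambda>x::real^'n. c) i = (\<lambda>x. 0)" for i by (rule ext) (simp add: pd_def)
  then show ?case by auto
next
  case (add f g)
  have d: "((\<lambda>t. f (x + t *\<^sub>R axis i 1) + g (x + t *\<^sub>R axis i 1))
             has_real_derivative pd f i x + pd g i x) (at 0)" for i x
    using add.IH by (auto intro!: DERIV_add)
  have "pd (\<lambda>x. f x + g x) i = (\<lambda>x. pd f i x + pd g i x)" for i
    by (rule ext) (simp add: pd_def[of "\<lambda>x. f x + g x"] DERIV_imp_deriv[OF d])
  then show ?case using d add.IH by auto
next
  case (mult f g)
  have d: "((\<lambda>t. f (x + t *\<^sub>R axis i 1) * g (x + t *\<^sub>R axis i 1))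
             has_real_derivative pd f i x * g x + f x * pd g i x) (at 0)" for i x
    using DERIV_mult[OF conjunct1[OF mult.IH(1), rule_format] conjunct1[OF mult.IH(2), rule_format]]
    by (simp add: mult.commute)
  have "pd (\<lambda>x. f x * g x) i = (\<lambda>x. pd f i x * g x + f x * pd g i x)" for i
    by (rule ext) (simp add: pd_def[of "\<lambda>x. f x * g x"] DERIV_imp_deriv[OF d])
  then show ?case
    using d mult.IH mult.hyps by (auto intro!: real_polynomial_function.intros(3,4))
qed

lemma real_polynomial_function_Ck:
  fixes f :: "real^'n \<Rightarrow> real"
  assumes "real_polynomial_function f"
  shows "Ck m U f"
  using assms
proof (induction m arbitrary: f)
  case 0
  then show ?case
    by (simp add: continuous_at_imp_continuous_on continuous_real_polymonial_function)
next
  case (Suc m)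
  then show ?case
    using real_polynomial_function_partials[OF Suc.prems]
    by (auto simp: real_differentiable_def continuous_at_imp_continuous_on
                   continuous_real_polymonial_function)
qed

lemma omega_C_infinity_domain:
  fixes \<Omega> :: "(real^3) set"
  assumes "\<Omega> = {p. p$3 < p$1 * (p$2)^2}"
  shows "C_infinity_domain \<Omega>"
proof -
  define \<rho> :: "real^3 \<Rightarrow> real" where "\<rho> = (\<lambda>p. p$3 - p$1 * (p$2)^2)"
  have poly: "real_polynomial_function \<rho>"
    unfolding \<rho>_def by (intro real_polynomial_function_diff real_polynomial_function.intros
        real_polynomial_function_power bounded_linear_vec_nth)
  have vertical: "((\<lambda>t. \<rho> (x + t *\<^sub>R axis 3 1)) has_real_derivative 1) (at 0)" for x
  proof -
    have "(\<lambda>t. \<rho> (x + t *\<^sub>R axis 3 1)) = (\<lambda>t. \<rho> x + t)"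
      by (rule ext) (simp add: \<rho>_def axis_def)
    then show ?thesis by (auto intro!: derivative_eq_intros)
  qed
  have "grad \<rho> x $ 3 = 1" for x
    by (simp add: grad_def pd_def DERIV_imp_deriv[OF vertical])
  then have "grad \<rho> x \<noteq> 0" for x by (metis one_neq_zero zero_index)
  then have "defining_function m \<Omega> UNIV \<rho>" for m
    using real_polynomial_function_Ck[OF poly] assms
    by (auto simp: defining_function_def \<rho>_def)
  then show ?thesis unfolding C_infinity_domain_def by blast
qed

text \<open>A continuous function with \<open>{\<rho> < 0} = \<Omega>\<close> inside \<open>U\<close> vanishes on the part of the
  boundary of the open set \<open>\<Omega>\<close> lying in \<open>U\<close>: points of \<open>\<Omega>\<close> accumulate at every boundary
  point, and boundary points of an open set lie outside it.\<close>

lemma defining_function_zero_on_frontier: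
  fixes \<rho> :: "'a::topological_space \<Rightarrow> real"
  assumes "open \<Omega>" "open U" "continuous_on U \<rho>"
    and sublevel: "{x\<in>U. \<rho> x < 0} = \<Omega> \<inter> U"
    and q: "q \<in> frontier \<Omega>" "q \<in> U"
  shows "\<rho> q = 0"
proof -
  have "q \<notin> \<Omega>" using q(1) \<open>open \<Omega>\<close> by (simp add: frontier_def interior_open)
  then have "\<not> \<rho> q < 0" using sublevel q(2) by blast
  moreover have "\<not> \<rho> q > 0"
  proof
    assume "\<rho> q > 0"
    define V where "V = U \<inter> \<rho> -` {0<..}"
    have "open V" unfolding V_def using assms(2,3) by (intro continuous_open_preimage) auto
    moreover have "q \<in> V \<inter> closure \<Omega>"
      using \<open>\<rho> q > 0\<close> q by (auto simp: V_def frontier_def)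
    ultimately obtain y where "y \<in> V" "y \<in> \<Omega>" using open_Int_closure_eq_empty by blast
    then have "y \<in> {x\<in>U. \<rho> x < 0}" using sublevel by (simp add: V_def)
    then show False using \<open>y \<in> V\<close> by (simp add: V_def)
  qed
  ultimately show ?thesis by simp
qed

text \<open>A point of \<open>U\<close> at distance at least \<open>\<delta>\<close> from \<open>frontier U\<close> has its whole \<open>\<delta>\<close>-ball in
  \<open>U\<close>, since a connected ball meeting both \<open>U\<close> and its complement crosses \<open>frontier U\<close>.
  This turns the separation of the two boundaries into a uniform neighbourhood.\<close>

lemma ball_subset_of_frontier_distance:
  fixes q :: "'a::real_normed_vector"
  assumes "q \<in> U" "\<forall>y\<in>frontier U. \<delta> \<le> dist q y"
  shows "ball q \<delta> \<subseteq> U"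
proof (rule ccontr)
  assume "\<not> ball q \<delta> \<subseteq> U"
  moreover have "ball q \<delta> \<inter> U \<noteq> {}"
  proof -
    obtain x where "dist q x < \<delta>" using calculation by (auto simp: subset_eq)
    then have "q \<in> ball q \<delta>" by (metis centre_in_ball le_less_trans zero_le_dist)
    then show ?thesis using assms(1) by blast
  qed
  ultimately obtain z where "z \<in> ball q \<delta>" "z \<in> frontier U"
    using connected_Int_frontier[of "ball q \<delta>" U] by auto
  then show False using assms(2) by force
qed

lemma pd_line_has_derivative:
  fixes f :: "real^'n \<Rightarrow> real"
  assumes "(\<lambda>v. f ((a + u *\<^sub>R axis j 1) + v *\<^sub>R axis j 1)) differentiable (at 0)"
  shows "((\<lambda>t. f (a + t *\<^sub>R axis j 1)) has_real_derivative pd f j (a + u *\<^sub>R axis j 1)) (at u)"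
proof -
  define h where "h = (\<lambda>v. f ((a + u *\<^sub>R axis j 1) + v *\<^sub>R axis j 1))"
  have "(h has_real_derivative pd f j (a + u *\<^sub>R axis j 1)) (at (u + (-u)))"
    using assms DERIV_deriv_iff_real_differentiable by (simp add: pd_def h_def)
  then have "((\<lambda>x. h (x + (-u))) has_real_derivative pd f j (a + u *\<^sub>R axis j 1)) (at u)"
    using DERIV_shift by blast
  moreover have "(\<lambda>x. h (x + (-u))) = (\<lambda>t. f (a + t *\<^sub>R axis j 1))"
    by (rule ext) (simp add: h_def algebra_simps)
  ultimately show ?thesis by simp
qed

lemma pd_line_mvt:
  fixes f :: "real^'n \<Rightarrow> real"
  assumes "0 < T"
    and "\<And>u. 0 \<le> u \<Longrightarrow> u \<le> T \<Longrightarrow> (\<lambda>v. f ((a + u *\<^sub>R axis j 1) + v *\<^sub>R axis j 1)) differentiable (at 0)"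
  shows "\<exists>\<tau>. 0 < \<tau> \<and> \<tau> < T \<and> f (a + T *\<^sub>R axis j 1) - f a = T * pd f j (a + \<tau> *\<^sub>R axis j 1)"
  using MVT2[where f="\<lambda>t. f (a + t *\<^sub>R axis j 1)", OF assms(1) pd_line_has_derivative[OF assms(2)]]
  by simp

lemma pd_line_bound:
  fixes f :: "real^'n \<Rightarrow> real"
  assumes "\<And>u. \<bar>u\<bar> \<le> \<bar>T\<bar> \<Longrightarrow> (\<lambda>v. f ((a + u *\<^sub>R axis j 1) + v *\<^sub>R axis j 1)) differentiable (at 0)"
    and "\<And>u. \<bar>u\<bar> \<le> \<bar>T\<bar> \<Longrightarrow> \<bar>pd f j (a + u *\<^sub>R axis j 1)\<bar> \<le> M"
  shows "\<bar>f (a + T *\<^sub>R axis j 1) - f a\<bar> \<le> M * \<bar>T\<bar>"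
proof -
  have "norm (f (a + T *\<^sub>R axis j 1) - f (a + 0 *\<^sub>R axis j 1)) \<le> M * norm (T - 0)"
  proof (rule field_differentiable_bound[where S="cball 0 \<bar>T\<bar>" and f="\<lambda>t. f (a + t *\<^sub>R axis j 1)"])
    fix u :: real assume "u \<in> cball 0 \<bar>T\<bar>"
    then have u: "\<bar>u\<bar> \<le> \<bar>T\<bar>" by simp
    show "((\<lambda>t. f (a + t *\<^sub>R axis j 1)) has_field_derivative pd f j (a + u *\<^sub>R axis j 1))
            (at u within cball 0 \<bar>T\<bar>)"
      using pd_line_has_derivative[OF assms(1)[OF u]] by (rule has_field_derivative_at_within)
    show "norm (pd f j (a + u *\<^sub>R axis j 1)) \<le> M" using assms(2)[OF u] by simp
  qed auto
  then show ?thesis by simp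
qed

lemma Ck2_line_differentiable:
  fixes f :: "real^'n \<Rightarrow> real"
  assumes "Ck 2 U f" "x \<in> U"
  shows "(\<lambda>t. f (x + t *\<^sub>R axis i 1)) differentiable (at 0)"
    and "(\<lambda>t. pd f k (x + t *\<^sub>R axis i 1)) differentiable (at 0)"
  using assms by (auto simp: numeral_2_eq_2)

lemma pd_zero_at_line_maximum:
  fixes f :: "real^'n \<Rightarrow> real"
  assumes "(\<lambda>t. f (a + t *\<^sub>R axis j 1)) differentiable (at 0)" "0 < d"
    and "\<And>u. \<bar>u\<bar> < d \<Longrightarrow> f (a + u *\<^sub>R axis j 1) \<le> f a"
  shows "pd f j a = 0"
proof (rule DERIV_local_max)
  show "((\<lambda>t. f (a + t *\<^sub>R axis j 1)) has_real_derivative pd f j a) (at 0)"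
    using assms(1) DERIV_deriv_iff_real_differentiable by (simp add: pd_def)
qed (use assms(2,3) in auto)

lemma second_order_line_bound:
  fixes f :: "real^'n \<Rightarrow> real"
  assumes C2: "Ck 2 U f"
    and seg: "\<And>u. \<bar>u\<bar> \<le> \<bar>s\<bar> \<Longrightarrow> a + u *\<^sub>R axis j 1 \<in> U"
    and B: "\<And>x. x \<in> U \<Longrightarrow> \<bar>pd (pd f j) j x\<bar> \<le> B"
    and "f a = 0" "pd f j a = 0"
  shows "\<bar>f (a + s *\<^sub>R axis j 1)\<bar> \<le> B * s^2"
proof -
  have "0 \<le> B" using B[OF seg[of 0]] by simp
  have slope: "\<bar>pd f j (a + u *\<^sub>R axis j 1)\<bar> \<le> B * \<bar>s\<bar>" if u: "\<bar>u\<bar> \<le> \<bar>s\<bar>" for u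
  proof -
    have "\<bar>pd f j (a + u *\<^sub>R axis j 1) - pd f j a\<bar> \<le> B * \<bar>u\<bar>"
      by (rule pd_line_bound) (use u seg B Ck2_line_differentiable[OF C2] in auto)
    then show ?thesis
      using \<open>pd f j a = 0\<close> mult_left_mono[OF u \<open>0 \<le> B\<close>] by simp
  qed
  have "\<bar>f (a + s *\<^sub>R axis j 1) - f a\<bar> \<le> (B * \<bar>s\<bar>) * \<bar>s\<bar>"
    by (rule pd_line_bound) (use seg slope Ck2_line_differentiable[OF C2] in auto)
  then show ?thesis using \<open>f a = 0\<close> by (simp add: power2_eq_square)
qed

lemma line_zero_lower_bound:
  fixes f :: "real^'n \<Rightarrow> real"
  assumes "0 < \<eta>" "f (b + \<eta> *\<^sub>R axis k 1) = 0"
    and "\<And>t. 0 \<le> t \<Longrightarrow> t \<le> \<eta> \<Longrightarrow> (\<lambda>v. f ((b + t *\<^sub>R axis k 1) + v *\<^sub>R axis k 1)) differentiable (at 0)"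
    and "\<And>t. 0 \<le> t \<Longrightarrow> t \<le> \<eta> \<Longrightarrow> m \<le> \<bar>pd f k (b + t *\<^sub>R axis k 1)\<bar>"
  shows "\<eta> * m \<le> \<bar>f b\<bar>"
proof -
  obtain \<tau> where \<tau>: "0 < \<tau>" "\<tau> < \<eta>"
    and mvt: "f (b + \<eta> *\<^sub>R axis k 1) - f b = \<eta> * pd f k (b + \<tau> *\<^sub>R axis k 1)"
    using pd_line_mvt[OF assms(1,3)] by blast
  have "f b = - (\<eta> * pd f k (b + \<tau> *\<^sub>R axis k 1))" using mvt assms(2) by simp
  then have "\<bar>f b\<bar> = \<eta> * \<bar>pd f k (b + \<tau> *\<^sub>R axis k 1)\<bar>"
    using assms(1) by (simp add: abs_mult)
  then show ?thesis using assms(1,4) \<tau> by (simp add: mult_left_mono)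
qed

text \<open>If the zero set also contains \<open>p + s e\<^sub>j + \<eta> e\<^sub>k\<close>
  (with \<open>s, \<eta>\<close> small enough that \<open>|\<partial>\<^sub>kf| \<ge> c/2\<close> persists), then \<open>\<eta> c/2 \<le> B s\<^sup>2\<close>: the zero set
  can rise at most quadratically, with a constant controlled by \<open>B/c\<close>.\<close>

lemma zero_set_cusp_estimate:
  fixes f :: "real^'n \<Rightarrow> real"
  assumes C2: "Ck 2 U f" and B: "\<And>x i l. x \<in> U \<Longrightarrow> \<bar>pd (pd f i) l x\<bar> \<le> B"
    and "0 < s" "0 < \<eta>" "B * (s + \<eta>) \<le> c / 2"
    and seg_j: "\<And>u. \<bar>u\<bar> \<le> s \<Longrightarrow> p + u *\<^sub>R axis j 1 \<in> U"
    and seg_k: "\<And>t. \<bar>t\<bar> \<le> \<eta> \<Longrightarrow> p + s *\<^sub>R axis j 1 + t *\<^sub>R axis k 1 \<in> U"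
    and "f p = 0" "pd f j p = 0" "c \<le> \<bar>pd f k p\<bar>"
    and "f (p + s *\<^sub>R axis j 1 + \<eta> *\<^sub>R axis k 1) = 0"
  shows "\<eta> * (c / 2) \<le> B * s^2"
proof -
  let ?b = "p + s *\<^sub>R axis j 1"
  have step_j: "\<bar>pd f k ?b - pd f k p\<bar> \<le> B * \<bar>s\<bar>"
    by (rule pd_line_bound) (use \<open>0 < s\<close> seg_j B Ck2_line_differentiable[OF C2] in auto)
  have transversal: "c / 2 \<le> \<bar>pd f k (?b + t *\<^sub>R axis k 1)\<bar>" if t: "\<bar>t\<bar> \<le> \<eta>" for t
  proof -
    have "\<bar>pd f k (?b + t *\<^sub>R axis k 1) - pd f k ?b\<bar> \<le> B * \<bar>t\<bar>"
      by (rule pd_line_bound) (use t seg_k B Ck2_line_differentiable[OF C2] in auto)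
    moreover have "B * \<bar>t\<bar> \<le> B * \<eta>"
      using t B[OF seg_j[of 0]] \<open>0 < s\<close> by (intro mult_left_mono) (auto intro: order_trans[OF abs_ge_zero])
    ultimately show ?thesis
      using step_j \<open>c \<le> \<bar>pd f k p\<bar>\<close> \<open>0 < s\<close> \<open>B * (s + \<eta>) \<le> c / 2\<close> by (simp add: algebra_simps)
  qed
  have "\<eta> * (c / 2) \<le> \<bar>f ?b\<bar>"
    by (rule line_zero_lower_bound)
      (use \<open>0 < \<eta>\<close> assms(11) transversal seg_k Ck2_line_differentiable[OF C2] in auto)
  also have "\<dots> \<le> B * s^2"
    by (rule second_order_line_bound[OF C2]) (use \<open>0 < s\<close> seg_j B assms(8,9) in auto)
  finally show ?thesis .
qed

lemma graph_in_frontier: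
  fixes \<Omega> :: "(real^3) set"
  assumes \<Omega>: "\<Omega> = {p. p$3 < p$1 * (p$2)^2}" and q: "q$3 = q$1 * (q$2)^2"
  shows "q \<in> frontier \<Omega>"
proof -
  have "q \<in> closure \<Omega>"
    unfolding closure_approachable
  proof (intro allI impI)
    fix e :: real assume "0 < e"
    have "q - (e/2) *\<^sub>R axis 3 1 \<in> \<Omega>" using q \<open>0 < e\<close> by (simp add: \<Omega> axis_def)
    moreover have "dist (q - (e/2) *\<^sub>R axis 3 1) q < e" using \<open>0 < e\<close> by (simp add: dist_norm)
    ultimately show "\<exists>y\<in>\<Omega>. dist y q < e" by blast
  qed
  moreover have "open \<Omega>" unfolding \<Omega> by (intro open_Collect_less continuous_intros)
  ultimately show ?thesis using q \<Omega> by (simp add: frontier_def interior_open)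
qed

text \<open>At a boundary point \<open>p = (X, 0, 0)\<close> with \<open>X > 0\<close>, any defining function has vanishing \<open>x\<close>- and
  \<open>y\<close>-derivatives: it vanishes on the line \<open>y = z = 0\<close>, and along the \<open>y\<close>-line through \<open>p\<close> it is
  negative except at \<open>p\<close> itself. So the gradient there is vertical.\<close>

lemma cusp_gradient_vertical:
  fixes \<rho> :: "real^3 \<Rightarrow> real"
  assumes p: "p = (\<chi> i. if i = 1 then X else 0)" "0 < X"
    and zero: "\<And>q. q$3 = q$1 * (q$2)^2 \<Longrightarrow> \<rho> q = 0"
    and neg: "\<And>q. q \<in> U \<Longrightarrow> q$3 < q$1 * (q$2)^2 \<Longrightarrow> \<rho> q < 0"
    and "(\<lambda>t. \<rho> (p + t *\<^sub>R axis 2 1)) differentiable (at 0)"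
    and "0 < d" "\<And>u. \<bar>u\<bar> < d \<Longrightarrow> p + u *\<^sub>R axis 2 1 \<in> U"
  shows "pd \<rho> 2 p = 0" "norm (grad \<rho> p) \<le> \<bar>pd \<rho> 3 p\<bar>"
proof -
  have "(\<lambda>t. \<rho> (p + t *\<^sub>R axis 1 1)) = (\<lambda>t. 0)"
    by (rule ext, rule zero) (simp add: p axis_def)
  then have pd1: "pd \<rho> 1 p = 0" by (simp add: pd_def)
  have "\<rho> (p + u *\<^sub>R axis 2 1) \<le> \<rho> p" if "\<bar>u\<bar> < d" for u
  proof (cases "u = 0")
    case False
    then have "\<rho> (p + u *\<^sub>R axis 2 1) < 0"
      using neg[OF assms(7)[OF that]] p by (simp add: axis_def)
    then show ?thesis using zero[of p] p by simp
  qed simp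
  then show pd2: "pd \<rho> 2 p = 0" using pd_zero_at_line_maximum assms(5,6) by blast
  have "norm (grad \<rho> p) \<le> (\<Sum>i\<in>UNIV. \<bar>grad \<rho> p $ i\<bar>)" by (rule norm_le_l1_cart)
  also have "\<dots> = \<bar>pd \<rho> 3 p\<bar>" by (simp add: sum_3 grad_def pd1 pd2)
  finally show "norm (grad \<rho> p) \<le> \<bar>pd \<rho> 3 p\<bar>" .
qed

text \<open>Choice of parameters: a height \<open>X\<close> with \<open>X c > 2B\<close> and a step \<open>s\<close> so small that the box of
  size \<open>s \<times> X s\<^sup>2\<close> fits in the \<open>\<delta>\<close>-neighbourhood and keeps \<open>B (s + X s\<^sup>2) \<le> c/2\<close>.\<close>

lemma cusp_parameters:
  fixes B c \<delta> :: real
  assumes "0 < c" "0 \<le> B" "0 < \<delta>"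
  obtains X s where "2 * B < X * c" "0 < X" "0 < s" "s + X * s^2 < \<delta>" "B * (s + X * s^2) \<le> c / 2"
proof -
  define X where "X = 2 * B / c + 1"
  define r where "r = min \<delta> (c / (2 * (B + 1)))"
  define s where "s = min 1 (r / (2 * (X + 1)))"
  have X: "2 * B < X * c" "0 < X" using assms by (simp_all add: X_def field_simps)
  have r: "0 < r" "r \<le> \<delta>" "B * r \<le> c / 2"
  proof -
    show "0 < r" "r \<le> \<delta>" using assms by (simp_all add: r_def)
    have "B * r \<le> B * (c / (2 * (B + 1)))" using assms by (intro mult_left_mono) (auto simp: r_def)
    also have "\<dots> \<le> c / 2" using assms by (simp add: field_simps)
    finally show "B * r \<le> c / 2" .
  qed
  have s: "0 < s" "s \<le> 1" using r X by (simp_all add: s_def)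
  have "s \<le> r / (2 * (X + 1))" by (simp add: s_def)
  then have "s * (X + 1) \<le> r / 2" using X by (simp add: field_simps)
  have "X * s^2 \<le> X * s" using s X by (simp add: power2_eq_square mult_left_le)
  then have small: "s + X * s^2 < r" using s r \<open>s * (X + 1) \<le> r / 2\<close> by (simp add: algebra_simps)
  have "B * (s + X * s^2) \<le> B * r" using small assms(2) by (intro mult_left_mono) auto
  then show ?thesis using small r by (intro that[OF X s(1)]) linarith+
qed

text \<open>At \<open>p = (X,0,0)\<close> the boundary point \<open>p + s e\<^sub>2 + X s\<^sup>2 e\<^sub>3\<close> rises
  by \<open>X s\<^sup>2\<close>, while the cusp estimate allows at most \<open>2 B s\<^sup>2 / c\<close>; \<open>X c > 2B\<close> is a contradiction.\<close>

lemma no_uniform_C2_defining_function: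
  fixes \<Omega> :: "(real^3) set"
  assumes \<Omega>: "\<Omega> = {p. p$3 < p$1 * (p$2)^2}"
  shows "\<not> uniform_defining_function 2 \<Omega> U \<rho>"
proof
  assume "uniform_defining_function 2 \<Omega> U \<rho>"
  then obtain \<delta> B c where
      "open U" and fU: "frontier \<Omega> \<subseteq> U" and C2: "Ck 2 U \<rho>"
      and sublevel: "{x\<in>U. \<rho> x < 0} = \<Omega> \<inter> U" and "0 < \<delta>"
      and sep: "\<forall>x\<in>frontier \<Omega>. \<forall>y\<in>frontier U. \<delta> \<le> dist x y"
      and bound: "\<forall>x\<in>U. \<forall>is. length is \<le> 2 \<longrightarrow> \<bar>iter_pd \<rho> is x\<bar> \<le> B"
      and "0 < c" and grad: "\<forall>x\<in>U. c \<le> norm (grad \<rho> x)"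
    unfolding uniform_defining_function_def defining_function_def by blast
  have graph: "q \<in> frontier \<Omega>" if "q$3 = q$1 * (q$2)^2" for q
    using graph_in_frontier[OF \<Omega> that] .
  have "open \<Omega>" unfolding \<Omega> by (intro open_Collect_less continuous_intros)
  have zero: "\<rho> q = 0" if "q$3 = q$1 * (q$2)^2" for q
    using defining_function_zero_on_frontier[OF \<open>open \<Omega>\<close> \<open>open U\<close> _ sublevel] C2 graph[OF that] fU
    by (auto simp: numeral_2_eq_2)
  have neg: "\<rho> q < 0" if "q \<in> U" "q$3 < q$1 * (q$2)^2" for q
    using sublevel that \<Omega> by blast
  have ball: "ball q \<delta> \<subseteq> U" if "q \<in> frontier \<Omega>" for q
    using ball_subset_of_frontier_distance that fU sep by blast
  have second: "\<bar>pd (pd \<rho> i) l x\<bar> \<le> B" if "x \<in> U" for x i l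
    using bound that by (metis iter_pd.simps length_Cons list.size(3) numeral_2_eq_2 order_refl)
  have "0 \<le> B" using bound fU graph[of 0] by (metis abs_ge_zero iter_pd.simps(1) list.size(3) order_trans subsetD zero_index zero_le mult_zero_left)
  obtain X s where X: "2 * B < X * c" "0 < X" and "0 < s"
    and small: "s + X * s^2 < \<delta>" "B * (s + X * s^2) \<le> c / 2"
    using cusp_parameters[OF \<open>0 < c\<close> \<open>0 \<le> B\<close> \<open>0 < \<delta>\<close>] by blast
  define p :: "real^3" where "p = (\<chi> i. if i = 1 then X else 0)"
  define \<eta> where "\<eta> = X * s^2"
  have "0 < \<eta>" using X \<open>0 < s\<close> by (simp add: \<eta>_def)
  have near: "p + u *\<^sub>R axis 2 1 + t *\<^sub>R axis 3 1 \<in> U" if "\<bar>u\<bar> \<le> s" "\<bar>t\<bar> \<le> \<eta>" for u t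
  proof -
    have "norm (- (u *\<^sub>R axis 2 1) - t *\<^sub>R axis 3 1 :: real^3) \<le> \<bar>u\<bar> + \<bar>t\<bar>"
      by (rule order_trans[OF norm_triangle_ineq4]) simp
    then have "dist p (p + u *\<^sub>R axis 2 1 + t *\<^sub>R axis 3 1) < \<delta>"
      using that small by (simp add: dist_norm add.assoc \<eta>_def)
    then show ?thesis using ball[OF graph[of p]] by (auto simp: p_def)
  qed
  have seg: "p + u *\<^sub>R axis 2 1 \<in> U" if "\<bar>u\<bar> \<le> s" for u
    using near[OF that, of 0] \<open>0 < \<eta>\<close> by simp
  have "pd \<rho> 2 p = 0" "norm (grad \<rho> p) \<le> \<bar>pd \<rho> 3 p\<bar>"
    using cusp_gradient_vertical[OF p_def X(2) zero neg _ \<open>0 < s\<close>]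
      Ck2_line_differentiable(1)[OF C2 seg[of 0]] seg \<open>0 < s\<close> by auto
  then have "c \<le> \<bar>pd \<rho> 3 p\<bar>" using grad seg[of 0] \<open>0 < s\<close> by force
  have "\<rho> (p + s *\<^sub>R axis 2 1 + \<eta> *\<^sub>R axis 3 1) = 0"
    by (rule zero) (simp add: p_def axis_def \<eta>_def)
  then have "\<eta> * (c / 2) \<le> B * s^2"
    using zero_set_cusp_estimate[where p=p and j=2 and k=3, OF C2 second \<open>0 < s\<close> \<open>0 < \<eta>\<close>]
      small(2) seg near \<open>0 < s\<close> zero[of p] \<open>pd \<rho> 2 p = 0\<close> \<open>c \<le> \<bar>pd \<rho> 3 p\<bar>\<close>
    by (auto simp: \<eta>_def p_def)
  then have "s^2 * (X * c) \<le> s^2 * (2 * B)" by (simp add: \<eta>_def algebra_simps)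
  then show False using X \<open>0 < s\<close> by simp
qed

theorem mainTheorem7:
  fixes \<Omega> :: "(real^3) set"
  assumes "\<Omega> = {p. p$3 < p$1 * (p$2)^2}"
  shows "C_infinity_domain \<Omega> \<and> \<not> (\<exists>U \<rho>. uniform_defining_function 2 \<Omega> U \<rho>)"
  using omega_C_infinity_domain[OF assms] no_uniform_C2_defining_function[OF assms] by blast

end
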